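(* Any braid $b\in\mathcal{B}_3$ which is not a power of $\Delta_3$ can be written in a unique way in the form $\sigma_j^k\,b_1\,\Delta_3^{\ell}$, where $j=1$ or $j=2$, $k\ne0$ is an integer, $\ell$ is a (not necessarily even) integer, and $b_1$ is a word in $\sigma_1^2$ and $\sigma_2^2$ in reduced form such that, if $b_1$ is not the identity, the first term of $b_1$ is a non-zero even power of $\sigma_2$ if $j=1$, and a non-zero even power of $\sigma_1$ if $j=2$.
   Context: $\mathcal{B}_3$ is the braid group on three strands with standard generators $\sigma_1,\sigma_2$; $\Delta_3=\sigma_1\sigma_2\sigma_1$ is the Garside element. A word in $\sigma_1^2,\sigma_2^2$ in reduced form is a product of nonzero powers of $\sigma_1^2$ and $\sigma_2^2$ alternating between the two; its terms are these maximal powers. *)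

theory Defs
  imports Main
begin

text \<open>Braid group B_3 presented by words in the letters 1, 2, -1, -2
  (sigma_1, sigma_2 and their inverses) modulo the congruence generated by
  free cancellation and the braid relation sigma_1 sigma_2 sigma_1 = sigma_2 sigma_1 sigma_2.\<close>

definition letters :: "int set" where
  "letters = {1, -1, 2, -2}"

inductive braid_eq :: "int list \<Rightarrow> int list \<Rightarrow> bool" where
  refl: "braid_eq u u"
| sym: "braid_eq u v \<Longrightarrow> braid_eq v u"
| trans: "braid_eq u v \<Longrightarrow> braid_eq v w \<Longrightarrow> braid_eq u w"
| cancel: "a \<in> letters \<Longrightarrow> braid_eq (u @ [a, -a] @ v) (u @ v)"
| braid_rel: "braid_eq (u @ [1, 2, 1] @ v) (u @ [2, 1, 2] @ v)"

definition spow :: "int \<Rightarrow> int \<Rightarrow> int list" where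
  "spow j k = (if 0 \<le> k then replicate (nat k) j else replicate (nat (-k)) (-j))"

definition delta_pow :: "int \<Rightarrow> int list" where
  "delta_pow l = (if 0 \<le> l then concat (replicate (nat l) [1, 2, 1])
                  else concat (replicate (nat (-l)) [-1, -2, -1]))"

text \<open>A word in sigma_1^2, sigma_2^2 given by its list of terms: (g, e) stands for
  the term (sigma_g^2)^e = sigma_g^(2e).\<close>
definition sq_word :: "(int \<times> int) list \<Rightarrow> int list" where
  "sq_word ts = concat (map (\<lambda>(g, e). spow g (2 * e)) ts)"

definition reduced_sq :: "(int \<times> int) list \<Rightarrow> bool" where
  "reduced_sq ts \<longleftrightarrow> (\<forall>(g, e) \<in> set ts. g \<in> {1, 2} \<and> e \<noteq> 0)
      \<and> (\<forall>i. Suc i < length ts \<longrightarrow> fst (ts ! i) \<noteq> fst (ts ! Suc i))"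

definition normal_data :: "int \<Rightarrow> int \<Rightarrow> (int \<times> int) list \<Rightarrow> int \<Rightarrow> bool" where
  "normal_data j k ts l \<longleftrightarrow> j \<in> {1, 2} \<and> k \<noteq> 0 \<and> reduced_sq ts
      \<and> (ts \<noteq> [] \<longrightarrow> fst (hd ts) = 3 - j)"

end

theory Submission
  imports Defs
begin

(* Both existence and uniqueness come from an action of words on normal forms.  A letter
   sigma_i^d (d = 1 or -1) acts on sigma_j^k b_1 Delta^l by left multiplication: for i = j it
   changes k, and for i <> j with k odd it uses sigma_i^d sigma_j^d = sigma_j^(-d) Delta^d and
   moves Delta^d to the right end, where conjugation by Delta exchanges sigma_1 and sigma_2.
   The action respects free cancellation and the braid relation, so it factors through B_3.
   Evaluating a word on Delta^0 gives a normal form equivalent to it, and evaluating the word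
   of a normal form gives back that normal form; hence equivalent normal forms coincide. *)

section \<open>Relations in the braid group\<close>

declare braid_eq.refl [simp] braid_eq.trans [trans]

lemma braid_eq_append_cong: "braid_eq u v \<Longrightarrow> braid_eq (p @ u @ q) (p @ v @ q)"
proof (induction rule: braid_eq.induct)
  case (sym u v) show ?case using sym.IH by (rule braid_eq.sym)
next
  case (trans u v w) show ?case using trans.IH by (rule braid_eq.trans)
next
  case (cancel a u v) then show ?case using braid_eq.cancel[of a "p @ u" "v @ q"] by simp
next
  case (braid_rel u v) then show ?case using braid_eq.braid_rel[of "p @ u" "v @ q"] by simp
qed (rule braid_eq.refl)

lemma braid_eq_append_left: "braid_eq u v \<Longrightarrow> braid_eq (p @ u) (p @ v)"
  using braid_eq_append_cong[of u v p "[]"] by simp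

lemma braid_eq_append_right: "braid_eq u v \<Longrightarrow> braid_eq (u @ q) (v @ q)"
  using braid_eq_append_cong[of u v "[]" q] by simp

lemma braid_eq_Cons: "braid_eq u v \<Longrightarrow> braid_eq (a # u) (a # v)"
  using braid_eq_append_left[of u v "[a]"] by simp

lemma braid_eq_cancel_Cons: "a \<in> letters \<Longrightarrow> braid_eq (a # -a # v) v"
  using braid_eq.cancel[of a "[]" v] by simp

lemma braid_eq_cancel_mid: "a \<in> letters \<Longrightarrow> braid_eq (u @ a # -a # v) (u @ v)"
  using braid_eq.cancel[of a u v] by simp

lemma braid_eq_rel_mid: "braid_eq (u @ 1 # 2 # 1 # v) (u @ 2 # 1 # 2 # v)"
  using braid_eq.braid_rel[of u v] by simp

lemma in_letters [simp]: "1 \<in> letters" "2 \<in> letters" "-1 \<in> letters" "-2 \<in> letters"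
  by (simp_all add: letters_def)

lemma delta_pow_one [simp]: "delta_pow 1 = [1, 2, 1]" "delta_pow (-1) = [-1, -2, -1]"
  by (simp_all add: delta_pow_def)

definition swap_letter :: "int \<Rightarrow> int" where
  "swap_letter a = (if 0 < a then 3 - a else - 3 - a)"

lemma gen_pair_pos:
  assumes "i \<in> {1, 2}"
  shows "braid_eq [i, 3 - i] (-(3 - i) # delta_pow 1)"
proof (cases "i = 1")
  case True
  have "braid_eq [1, 2] [-2, 2, 1, 2]"
    using braid_eq_cancel_Cons[of "-2" "[1, 2]"] by (simp add: braid_eq.sym)
  also have "braid_eq \<dots> [-2, 1, 2, 1]"
    using braid_eq.sym[OF braid_eq_rel_mid[of "[-2]" "[]"]] by simp
  finally show ?thesis using True by simp
next
  case False
  then have "i = 2" using assms by simp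
  then show ?thesis using braid_eq_cancel_Cons[of "-1" "[2, 1]"] by (simp add: braid_eq.sym)
qed

lemma delta_conj_letter:
  assumes "a \<in> letters"
  shows "braid_eq (delta_pow 1 @ [a]) (swap_letter a # delta_pow 1)"
proof -
  have "a = 1 \<or> a = 2 \<or> a = -1 \<or> a = -2" using assms by (auto simp: letters_def)
  moreover have "braid_eq [1, 2, 1, 1] [2, 1, 2, 1]"
    using braid_eq_rel_mid[of "[]" "[1]"] by simp
  moreover have "braid_eq [1, 2, 1, 2] [1, 1, 2, 1]"
    using braid_eq.sym[OF braid_eq_rel_mid[of "[1]" "[]"]] by simp
  moreover have "braid_eq [1, 2, 1, -1] [-2, 1, 2, 1]"
  proof -
    have "braid_eq [1, 2, 1, -1] [1, 2]"
      using braid_eq_cancel_mid[of 1 "[1, 2]" "[]"] by simp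
    also have "braid_eq \<dots> [-2, 1, 2, 1]"
      using gen_pair_pos[of 1] by simp
    finally show ?thesis .
  qed
  moreover have "braid_eq [1, 2, 1, -2] [-1, 1, 2, 1]"
  proof -
    have "braid_eq [1, 2, 1, -2] [2, 1, 2, -2]"
      using braid_eq_rel_mid[of "[]" "[-2]"] by simp
    also have "braid_eq \<dots> [2, 1]"
      using braid_eq_cancel_mid[of 2 "[2, 1]" "[]"] by simp
    also have "braid_eq \<dots> [-1, 1, 2, 1]"
      using gen_pair_pos[of 2] by simp
    finally show ?thesis .
  qed
  ultimately show ?thesis by (auto simp: swap_letter_def)
qed

lemma swap_letter_involution: "a \<in> letters \<Longrightarrow> swap_letter (swap_letter a) = a"
  by (auto simp: letters_def swap_letter_def)

lemma swap_letter_letters: "a \<in> letters \<Longrightarrow> swap_letter a \<in> letters"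
  by (auto simp: letters_def swap_letter_def)

lemma delta_conj_pos:
  "set x \<subseteq> letters \<Longrightarrow> braid_eq (delta_pow 1 @ x) (map swap_letter x @ delta_pow 1)"
proof (induction x)
  case (Cons a x)
  have "braid_eq (delta_pow 1 @ a # x) ((delta_pow 1 @ [a]) @ x)" by simp
  also have "braid_eq \<dots> (swap_letter a # delta_pow 1 @ x)"
    using braid_eq_append_right[OF delta_conj_letter] Cons.prems by simp
  also have "braid_eq \<dots> (swap_letter a # map swap_letter x @ delta_pow 1)"
    using Cons by (intro braid_eq_Cons) simp
  finally show ?case by simp
qed simp

lemma delta_inverse:
  assumes "d \<in> {1, -1}"
  shows "braid_eq (delta_pow d @ delta_pow (-d) @ x) x"
proof -
  have "braid_eq ([a, b, c] @ [-c, -b, -a] @ x) x" if "a \<in> letters" "b \<in> letters" "c \<in> letters"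
    for a b c
  proof -
    have "braid_eq ([a, b, c] @ [-c, -b, -a] @ x) (a # b # -b # -a # x)"
      using braid_eq_cancel_mid[of c "[a, b]" "[-b, -a] @ x"] that by simp
    also have "braid_eq \<dots> (a # -a # x)"
      using braid_eq_cancel_mid[of b "[a]" "-a # x"] that by simp
    also have "braid_eq \<dots> x"
      using braid_eq_cancel_Cons that by simp
    finally show ?thesis .
  qed
  from this[of 1 2 1] this[of "-1" "-2" "-1"] show ?thesis using assms by auto
qed

lemma delta_conj:
  assumes "d \<in> {1, -1}" and "set x \<subseteq> letters"
  shows "braid_eq (delta_pow d @ x) (map swap_letter x @ delta_pow d)"
proof (cases "d = 1")
  case True
  then show ?thesis using delta_conj_pos[OF assms(2)] by simp
next
  case False
  then have d: "d = -1" using assms(1) by simp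
  have swap_x: "set (map swap_letter x) \<subseteq> letters" "map swap_letter (map swap_letter x) = x"
    using assms(2) by (induction x) (auto simp: swap_letter_letters swap_letter_involution)
  have "braid_eq (delta_pow (-1) @ x) (delta_pow (-1) @ (x @ delta_pow 1) @ delta_pow (-1))"
    using braid_eq_append_left[OF braid_eq.sym[OF delta_inverse[of 1 "[]"]], of "delta_pow (-1) @ x"]
    by simp
  also have "braid_eq \<dots> (delta_pow (-1) @ (delta_pow 1 @ map swap_letter x) @ delta_pow (-1))"
    using braid_eq_append_cong[OF braid_eq.sym[OF delta_conj_pos[OF swap_x(1)]],
        of "delta_pow (-1)" "delta_pow (-1)", unfolded swap_x(2)]
    by simp
  also have "braid_eq \<dots> (map swap_letter x @ delta_pow (-1))"
    using delta_inverse[of "-1"] by simp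
  finally show ?thesis using d by simp
qed

lemma delta_pow_add_same_sign:
  assumes "d \<in> {1, -1}" and "0 \<le> d * l"
  shows "delta_pow (l + d) = delta_pow d @ delta_pow l"
proof (cases "d = 1")
  case True
  then obtain n where "l = int n" using assms(2) nonneg_eq_int by auto
  then show ?thesis using True by (simp add: delta_pow_def nat_add_distrib)
next
  case False
  then have "d = -1" using assms(1) by simp
  then obtain n where "l = - int n" using assms(2) by (metis minus_minus mult_minus1 nonneg_eq_int)
  then show ?thesis using \<open>d = -1\<close> by (simp add: delta_pow_def nat_add_distrib)
qed

lemma delta_pow_add:
  assumes "d \<in> {1, -1}"
  shows "braid_eq (delta_pow d @ delta_pow l) (delta_pow (l + d))"
proof (cases "0 \<le> d * l")
  case True
  then show ?thesis using delta_pow_add_same_sign[OF assms] by simp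
next
  case False
  have "-d \<in> {1, -1}" "0 \<le> -d * (l + d)" using assms False by auto
  then have "delta_pow l = delta_pow (-d) @ delta_pow (l + d)"
    using delta_pow_add_same_sign[of "-d" "l + d"] by simp
  then show ?thesis using delta_inverse[OF assms] by simp
qed

lemma gen_pair_delta:
  assumes "i \<in> {1, 2}" and "d \<in> {1, -1}"
  shows "braid_eq [d * i, d * (3 - i)] (-(d * (3 - i)) # delta_pow d)"
proof -
  have "braid_eq [-1, -2] [2, -1, -2, -1]"
  proof -
    have "braid_eq [-1, -2] (delta_pow (-1) @ [1])"
      using braid_eq_cancel_mid[of "-1" "[-1, -2]" "[]"] by (simp add: braid_eq.sym)
    also have "braid_eq \<dots> [2, -1, -2, -1]"
      using delta_conj[of "-1" "[1]"] by (simp add: swap_letter_def)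
    finally show ?thesis .
  qed
  moreover have "braid_eq [-2, -1] [1, -1, -2, -1]"
    using braid_eq_cancel_Cons[of 1 "[-2, -1]"] by (simp add: braid_eq.sym)
  ultimately show ?thesis using assms gen_pair_pos[OF assms(1)] by auto
qed

lemma spow_zero [simp]: "spow j 0 = []"
  by (simp add: spow_def)

lemma spow_unit: "d \<in> {1, -1} \<Longrightarrow> spow j d = [d * j]"
  by (auto simp: spow_def)

lemma spow_neg_unit: "d \<in> {1, -1} \<Longrightarrow> spow j (- d) = [- (d * j)]"
  by (auto simp: spow_def)

lemma spow_add_same_sign:
  assumes "d \<in> {1, -1}" and "0 \<le> d * k"
  shows "spow j (k + d) = d * j # spow j k"
proof (cases "d = 1")
  case True
  then obtain n where "k = int n" using assms(2) nonneg_eq_int by auto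
  then show ?thesis using True by (simp add: spow_def nat_add_distrib)
next
  case False
  then have "d = -1" using assms(1) by simp
  then obtain n where "k = - int n" using assms(2) by (metis minus_minus mult_minus1 nonneg_eq_int)
  then show ?thesis using \<open>d = -1\<close> by (simp add: spow_def nat_add_distrib)
qed

lemma spow_add:
  assumes "j \<in> letters" and "d \<in> {1, -1}"
  shows "braid_eq (spow j (k + d)) (d * j # spow j k)"
proof (cases "0 \<le> d * k")
  case True
  then show ?thesis using spow_add_same_sign[OF assms(2)] by simp
next
  case False
  have "-d \<in> {1, -1}" "0 \<le> -d * (k + d)" using assms(2) False by auto
  then have "spow j k = - d * j # spow j (k + d)"
    using spow_add_same_sign[of "-d" "k + d"] by simp
  moreover have "d * j \<in> letters" using assms by (auto simp: letters_def)
  ultimately show ?thesis using braid_eq_cancel_Cons[of "d * j"] by (simp add: braid_eq.sym)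
qed

lemma spow_letters: "j \<in> letters \<Longrightarrow> set (spow j k) \<subseteq> letters"
  by (auto simp: spow_def letters_def)

lemma map_swap_spow: "j \<in> {1, 2} \<Longrightarrow> map swap_letter (spow j k) = spow (3 - j) k"
  by (auto simp: spow_def swap_letter_def)

fun alt_terms :: "int \<Rightarrow> int list \<Rightarrow> (int \<times> int) list" where
  "alt_terms g [] = []"
| "alt_terms g (e # es) = (g, e) # alt_terms (3 - g) es"

lemma sq_word_Nil [simp]: "sq_word [] = []"
  by (simp add: sq_word_def)

lemma sq_word_Cons [simp]: "sq_word ((g, e) # ts) = spow g (2 * e) @ sq_word ts"
  by (simp add: sq_word_def)

lemma sq_word_letters: "g \<in> {1, 2} \<Longrightarrow> set (sq_word (alt_terms g es)) \<subseteq> letters"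
proof (induction es arbitrary: g)
  case (Cons e es)
  have "3 - g \<in> {1, 2}" "g \<in> letters" using Cons.prems by (auto simp: letters_def)
  then show ?case using Cons.IH[of "3 - g"] spow_letters[of g] by auto
qed simp

lemma map_swap_sq_word:
  "g \<in> {1, 2} \<Longrightarrow> map swap_letter (sq_word (alt_terms g es)) = sq_word (alt_terms (3 - g) es)"
proof (induction es arbitrary: g)
  case (Cons e es)
  then show ?case using map_swap_spow[of g] by auto
qed simp

lemma braid_eq_pull_delta:
  assumes "i \<in> {1, 2}" and "d \<in> {1, -1}" and j: "j = 3 - i"
  shows "braid_eq (d * i # spow j (k + d) @ sq_word (alt_terms i es) @ delta_pow l)
    (-(d * j) # spow i k @ sq_word (alt_terms j es) @ delta_pow (l + d))"
proof -
  have i_j: "i \<in> letters" "j \<in> letters" "j \<in> {1, 2}" "3 - j = i"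
    using assms by (auto simp: letters_def)
  let ?x = "spow j k @ sq_word (alt_terms i es)"
  have x: "set ?x \<subseteq> letters" "map swap_letter (spow j k) = spow i k"
    "map swap_letter (sq_word (alt_terms i es)) = sq_word (alt_terms j es)"
    using spow_letters[OF i_j(2)] sq_word_letters[OF assms(1)] map_swap_spow[OF i_j(3)]
      map_swap_sq_word[OF assms(1)] i_j(4) j by auto
  have "braid_eq (d * i # spow j (k + d) @ sq_word (alt_terms i es) @ delta_pow l)
      ([d * i, d * j] @ ?x @ delta_pow l)"
    using braid_eq_append_cong[OF spow_add[OF i_j(2) assms(2)], of "[d * i]"] by simp
  also have "braid_eq \<dots> ((-(d * j) # delta_pow d) @ ?x @ delta_pow l)"
    using braid_eq_append_right[OF gen_pair_delta[OF assms(1,2)]] j by simp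
  also have "braid_eq \<dots> ([-(d * j)] @ (delta_pow d @ ?x) @ delta_pow l)"
    by simp
  also have "braid_eq \<dots> ([-(d * j)] @ (map swap_letter ?x @ delta_pow d) @ delta_pow l)"
    using delta_conj[OF assms(2) x(1)] by (rule braid_eq_append_cong)
  also have "braid_eq \<dots> ((-(d * j) # map swap_letter ?x) @ delta_pow d @ delta_pow l)"
    by simp
  also have "braid_eq \<dots> ((-(d * j) # map swap_letter ?x) @ delta_pow (l + d))"
    using delta_pow_add[OF assms(2)] by (rule braid_eq_append_left)
  finally show ?thesis using x(2,3) by simp
qed

section \<open>Normal forms and the action of words\<close>

datatype nf = Delta_pow int | Normal int int "int list" int

fun nf_word :: "nf \<Rightarrow> int list" where
  "nf_word (Delta_pow m) = delta_pow m"
| "nf_word (Normal j k es l) = spow j k @ sq_word (alt_terms (3 - j) es) @ delta_pow l"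

fun valid_nf :: "nf \<Rightarrow> bool" where
  "valid_nf (Delta_pow m) \<longleftrightarrow> True"
| "valid_nf (Normal j k es l) \<longleftrightarrow> j \<in> {1, 2} \<and> k \<noteq> 0 \<and> 0 \<notin> set es"

(* Left multiplication by sigma_i^d; the case i <> j, k odd is braid_eq_pull_delta. *)
fun mult_gen :: "int \<Rightarrow> int \<Rightarrow> nf \<Rightarrow> nf" where
  "mult_gen i d (Delta_pow m) = Normal i d [] m"
| "mult_gen i d (Normal j k es l) =
    (if i = j then
       (if k + d \<noteq> 0 then Normal j (k + d) es l
        else case es of [] \<Rightarrow> Delta_pow l | e # es' \<Rightarrow> Normal (3 - j) (2 * e) es' l)
     else if even k then Normal i d (k div 2 # es) l
     else if k \<noteq> d then Normal j (- d) ((k - d) div 2 # es) (l + d)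
     else case es of [] \<Rightarrow> Normal j (- d) [] (l + d) | e # es' \<Rightarrow> Normal j (2 * e - d) es' (l + d))"

lemma valid_mult_gen:
  "valid_nf s \<Longrightarrow> i \<in> {1, 2} \<Longrightarrow> d \<in> {1, -1} \<Longrightarrow> valid_nf (mult_gen i d s)"
  by (cases s) (auto split: list.splits, presburger+)

lemma mult_gen_inverse:
  assumes "valid_nf s" and "i \<in> {1, 2}" and "d \<in> {1, -1}"
  shows "mult_gen i (- d) (mult_gen i d s) = s"
proof (cases s)
  case (Normal j k es l)
  from assms(3) consider "d = 1" | "d = -1" by blast
  then show ?thesis
    using assms Normal by cases (auto split: list.splits, presburger+)
qed simp

lemma mult_gen_braid_rel:
  assumes "valid_nf s"
  shows "mult_gen 1 1 (mult_gen 2 1 (mult_gen 1 1 s)) = mult_gen 2 1 (mult_gen 1 1 (mult_gen 2 1 s))"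
proof (cases s)
  case (Normal j k es l)
  obtain n where "k = 2 * n \<or> k = 2 * n + 1" by (metis oddE evenE)
  then show ?thesis using assms Normal by (auto split: list.splits)
qed simp

lemma mult_gen_same_word:
  assumes "j \<in> {1, 2}" and "d \<in> {1, -1}"
  shows "braid_eq (nf_word (mult_gen j d (Normal j k es l))) (d * j # nf_word (Normal j k es l))"
proof (cases "k + d = 0")
  case False
  have "j \<in> letters" using assms(1) by (auto simp: letters_def)
  with False show ?thesis
    using braid_eq_append_right[OF spow_add[OF _ assms(2)]] by simp
next
  case True
  then have "k = - d" by simp
  then have k: "spow j k = [- (d * j)]" using spow_neg_unit[OF assms(2)] by simp
  have "d * j \<in> letters" using assms by (auto simp: letters_def)
  moreover have "nf_word (mult_gen j d (Normal j k es l)) = sq_word (alt_terms (3 - j) es) @ delta_pow l"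
    using True by (cases es) auto
  ultimately show ?thesis using k braid_eq_cancel_Cons[of "d * j"] by (simp add: braid_eq.sym)
qed

lemma mult_gen_other_word:
  assumes "i \<in> {1, 2}" and "d \<in> {1, -1}" and j: "j = 3 - i"
  shows "braid_eq (nf_word (mult_gen i d (Normal j k es l))) (d * i # nf_word (Normal j k es l))"
proof -
  have "i \<noteq> j" "3 - j = i" "j \<in> letters" using assms by (auto simp: letters_def)
  then have word: "nf_word (Normal j k es l) = spow j k @ sq_word (alt_terms i es) @ delta_pow l"
    by simp
  consider "even k" | "odd k" "k \<noteq> d" | "odd k" "k = d" using assms(2) by fastforce
  then show ?thesis
  proof cases
    case 1
    then show ?thesis using \<open>i \<noteq> j\<close> word j spow_unit[OF assms(2)] by simp
  next
    case 2
    then have "2 * ((k - d) div 2) = k - d" using assms(2) by auto presburger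
    with 2 show ?thesis
      using braid_eq.sym[OF braid_eq_pull_delta[OF assms, of "k - d" es l]] \<open>i \<noteq> j\<close> word j
        spow_neg_unit[OF assms(2)]
      by simp
  next
    case 3
    note pull = braid_eq.sym[OF braid_eq_pull_delta[OF assms, of 0 es l], unfolded \<open>k = d\<close>[symmetric]]
    show ?thesis
    proof (cases es)
      case Nil
      then show ?thesis
        using pull 3 \<open>i \<noteq> j\<close> word j spow_unit[OF assms(2)] spow_neg_unit[OF assms(2)] by simp
    next
      case (Cons e es')
      have "- d \<in> {1, -1}" using assms(2) by auto
      from braid_eq_append_right[OF spow_add[OF \<open>j \<in> letters\<close> this]]
      have "braid_eq (spow j (2 * e - d) @ sq_word (alt_terms i es') @ delta_pow (l + d))
          (- (d * j) # spow j (2 * e) @ sq_word (alt_terms i es') @ delta_pow (l + d))"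
        by simp
      then show ?thesis
        using pull 3 Cons \<open>i \<noteq> j\<close> \<open>3 - j = i\<close> word by (auto intro: braid_eq.trans)
    qed
  qed
qed

lemma mult_gen_word:
  assumes "valid_nf s" and "i \<in> {1, 2}" and "d \<in> {1, -1}"
  shows "braid_eq (nf_word (mult_gen i d s)) (d * i # nf_word s)"
proof (cases s)
  case (Delta_pow m)
  then show ?thesis using spow_unit[OF assms(3)] by simp
next
  case (Normal j k es l)
  then consider "j = i" | "j = 3 - i" using assms(1,2) by fastforce
  then show ?thesis
  proof cases
    case 1
    show ?thesis unfolding Normal 1 by (rule mult_gen_same_word[OF assms(2,3)])
  next
    case 2
    show ?thesis unfolding Normal by (rule mult_gen_other_word[OF assms(2,3) 2])
  qed
qed

definition act :: "int \<Rightarrow> nf \<Rightarrow> nf" where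
  "act a s = (if a \<in> letters then mult_gen \<bar>a\<bar> (sgn a) s else s)"

lemma letter_abs_sgn: "a \<in> letters \<Longrightarrow> \<bar>a\<bar> \<in> {1, 2} \<and> sgn a \<in> {1, -1}"
  by (auto simp: letters_def)

lemma valid_act: "valid_nf s \<Longrightarrow> valid_nf (act a s)"
  using valid_mult_gen letter_abs_sgn by (simp add: act_def)

lemma valid_foldr_act: "valid_nf s \<Longrightarrow> valid_nf (foldr act u s)"
  by (induction u) (simp_all add: valid_act)

lemma act_word: "valid_nf s \<Longrightarrow> a \<in> letters \<Longrightarrow> braid_eq (nf_word (act a s)) (a # nf_word s)"
  using mult_gen_word[of s "\<bar>a\<bar>" "sgn a"] letter_abs_sgn[of a] by (simp add: act_def sgn_mult_abs)

lemma act_inverse: "valid_nf s \<Longrightarrow> a \<in> letters \<Longrightarrow> act a (act (- a) s) = s"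
  using mult_gen_inverse[of s "\<bar>a\<bar>" "- sgn a"] letter_abs_sgn[of a]
  by (auto simp: act_def letters_def)

lemma act_braid_rel: "valid_nf s \<Longrightarrow> act 1 (act 2 (act 1 s)) = act 2 (act 1 (act 2 s))"
  using mult_gen_braid_rel by (simp add: act_def)

lemma foldr_act_braid_eq: "braid_eq u v \<Longrightarrow> valid_nf s \<Longrightarrow> foldr act u s = foldr act v s"
proof (induction arbitrary: s rule: braid_eq.induct)
  case (cancel a u v)
  then show ?case using act_inverse[OF valid_foldr_act[OF cancel.prems, of v]] by simp
next
  case (braid_rel u v)
  show ?case using act_braid_rel[OF valid_foldr_act[OF braid_rel.prems, of v]] by simp
qed auto

lemma nf_word_foldr_act:
  assumes "set w \<subseteq> letters"
  shows "valid_nf (foldr act w (Delta_pow 0)) \<and> braid_eq (nf_word (foldr act w (Delta_pow 0))) w"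
  using assms
proof (induction w)
  case (Cons a w)
  then have "braid_eq (nf_word (act a (foldr act w (Delta_pow 0))))
      (a # nf_word (foldr act w (Delta_pow 0)))"
    by (simp add: act_word)
  also have "braid_eq \<dots> (a # w)" using Cons by (simp add: braid_eq_Cons)
  finally show ?case using Cons by (simp add: valid_act)
qed (simp add: delta_pow_def)

lemma foldr_act_delta_pow: "foldr act (delta_pow l) (Delta_pow 0) = Delta_pow l"
proof -
  have "foldr act (concat (replicate n [1, 2, 1])) (Delta_pow 0) = Delta_pow (int n)" for n
    by (induction n) (simp_all add: act_def)
  moreover have "foldr act (concat (replicate n [-1, -2, -1])) (Delta_pow 0) = Delta_pow (- int n)"
    for n
    by (induction n) (simp_all add: act_def letters_def)
  ultimately show ?thesis by (simp add: delta_pow_def)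
qed

lemma spow_replicate: "spow j k = replicate (nat \<bar>k\<bar>) (sgn k * j)"
  by (simp add: spow_def)

lemma foldr_act_spow:
  assumes j: "j \<in> {1, 2}" and "k \<noteq> 0"
  shows "foldr act (spow j k) (case es of [] \<Rightarrow> Delta_pow l | e # es' \<Rightarrow> Normal (3 - j) (2 * e) es' l)
    = Normal j k es l"
proof -
  let ?t = "case es of [] \<Rightarrow> Delta_pow l | e # es' \<Rightarrow> Normal (3 - j) (2 * e) es' l"
  define d where "d = sgn k"
  have d: "d \<in> {1, -1}" using \<open>k \<noteq> 0\<close> by (simp add: d_def sgn_if)
  have act_dj: "act (d * j) s = mult_gen j d s" for s
    using d j by (auto simp: act_def letters_def)
  have "foldr act (replicate (Suc n) (d * j)) ?t = Normal j (d * int (Suc n)) es l" for n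
  proof (induction n)
    case 0
    show ?case using j by (cases es) (auto simp: act_dj)
  next
    case (Suc n)
    have "d * int (Suc n) + d \<noteq> 0" using d by auto
    then show ?case using Suc by (simp add: act_dj algebra_simps)
  qed
  moreover have "nat \<bar>k\<bar> = Suc (nat \<bar>k\<bar> - 1)" "k = d * int (nat \<bar>k\<bar>)"
    using \<open>k \<noteq> 0\<close> by (auto simp: d_def sgn_if)
  ultimately show ?thesis unfolding spow_replicate d_def[symmetric] by metis
qed

lemma foldr_act_sq_word:
  "g \<in> {1, 2} \<Longrightarrow> 0 \<notin> set es \<Longrightarrow> foldr act (sq_word (alt_terms g es) @ delta_pow l) (Delta_pow 0)
    = (case es of [] \<Rightarrow> Delta_pow l | e # es' \<Rightarrow> Normal g (2 * e) es' l)"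
proof (induction es arbitrary: g)
  case Nil
  then show ?case by (simp add: foldr_act_delta_pow)
next
  case (Cons e es)
  then have "3 - g \<in> {1, 2}" by auto
  with Cons show ?case using foldr_act_spow[of g "2 * e" l es] by simp
qed

lemma foldr_act_nf_word: "valid_nf s \<Longrightarrow> foldr act (nf_word s) (Delta_pow 0) = s"
proof (cases s)
  case (Normal j k es l)
  moreover assume "valid_nf s"
  ultimately have "3 - j \<in> {1, 2}" "j \<in> {1, 2}" "k \<noteq> 0" "0 \<notin> set es" by auto
  then show ?thesis
    using Normal foldr_act_sq_word[of "3 - j" es l] foldr_act_spow[of j k l es] by simp
qed (simp add: foldr_act_delta_pow)

lemma nf_word_braid_eq_imp_eq:
  assumes "valid_nf s" and "valid_nf t" and "braid_eq (nf_word s) (nf_word t)"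
  shows "s = t"
  using foldr_act_braid_eq[OF assms(3), of "Delta_pow 0"] foldr_act_nf_word assms(1,2) by simp

section \<open>Normal form data\<close>

lemma reduced_sq_iff:
  "reduced_sq ts \<longleftrightarrow> (\<forall>(g, e) \<in> set ts. g \<in> {1, 2} \<and> e \<noteq> 0) \<and> distinct_adj (map fst ts)"
  by (simp add: reduced_sq_def distinct_adj_conv_nth)

lemma reduced_sq_Cons:
  "reduced_sq ((g, e) # ts) \<longleftrightarrow>
    g \<in> {1, 2} \<and> e \<noteq> 0 \<and> reduced_sq ts \<and> (ts \<noteq> [] \<longrightarrow> fst (hd ts) \<noteq> g)"
  unfolding reduced_sq_iff by (auto simp: distinct_adj_Cons hd_map)

lemma reduced_sq_alt_terms: "g \<in> {1, 2} \<Longrightarrow> reduced_sq (alt_terms g es) \<longleftrightarrow> 0 \<notin> set es"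
proof (induction es arbitrary: g)
  case (Cons e es)
  then have "3 - g \<in> {1, 2}" "reduced_sq (alt_terms (3 - g) es) \<longleftrightarrow> 0 \<notin> set es" by auto
  moreover have "alt_terms (3 - g) es \<noteq> [] \<longrightarrow> fst (hd (alt_terms (3 - g) es)) \<noteq> g"
    using Cons.prems by (cases es) auto
  ultimately show ?case using Cons.prems by (auto simp: reduced_sq_Cons)
qed (simp add: reduced_sq_def)

lemma alt_terms_map_snd:
  "reduced_sq ts \<Longrightarrow> (ts \<noteq> [] \<longrightarrow> fst (hd ts) = g) \<Longrightarrow> alt_terms g (map snd ts) = ts"
proof (induction ts arbitrary: g)
  case (Cons t ts)
  obtain g' e where t: "t = (g', e)" by fastforce
  have "reduced_sq ts" "g' = g" "g \<in> {1, 2}" "ts \<noteq> [] \<longrightarrow> fst (hd ts) \<noteq> g"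
    using Cons.prems unfolding t reduced_sq_Cons by auto
  moreover have "ts \<noteq> [] \<longrightarrow> fst (hd ts) \<in> {1, 2}"
    using \<open>reduced_sq ts\<close> by (cases ts) (auto simp: reduced_sq_Cons)
  ultimately have "alt_terms (3 - g) (map snd ts) = ts"
    by (intro Cons.IH) auto
  then show ?case using t \<open>g' = g\<close> by simp
qed simp

lemma normal_data_iff:
  "normal_data j k ts l \<longleftrightarrow> (\<exists>es. valid_nf (Normal j k es l) \<and> ts = alt_terms (3 - j) es)"
proof
  assume "normal_data j k ts l"
  then show "\<exists>es. valid_nf (Normal j k es l) \<and> ts = alt_terms (3 - j) es"
    using alt_terms_map_snd[of ts "3 - j"]
    by (intro exI[of _ "map snd ts"]) (auto simp: normal_data_def reduced_sq_iff)
next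
  assume "\<exists>es. valid_nf (Normal j k es l) \<and> ts = alt_terms (3 - j) es"
  then obtain es where es: "valid_nf (Normal j k es l)" "ts = alt_terms (3 - j) es" by blast
  then have "3 - j \<in> {1, 2}" by auto
  then show "normal_data j k ts l"
    using es reduced_sq_alt_terms[of "3 - j" es] by (cases es) (auto simp: normal_data_def)
qed

theorem lemma2:
  fixes w :: "int list"
  assumes "set w \<subseteq> letters"
    and "\<not> (\<exists>m. braid_eq w (delta_pow m))"
  shows "\<exists>!(j, k, ts, l). normal_data j k ts l
           \<and> braid_eq w (spow j k @ sq_word ts @ delta_pow l)"
proof -
  obtain s where s: "valid_nf s" "braid_eq w (nf_word s)"
    using nf_word_foldr_act[OF assms(1)] braid_eq.sym by blast
  then obtain j k es l where s_Normal: "s = Normal j k es l"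
    using assms(2) by (cases s) auto
  have data_iff: "normal_data j' k' ts' l' \<and> braid_eq w (spow j' k' @ sq_word ts' @ delta_pow l')
      \<longleftrightarrow> (\<exists>es'. s = Normal j' k' es' l' \<and> ts' = alt_terms (3 - j') es')"
    for j' k' ts' l'
  proof -
    have "braid_eq w (nf_word t) \<longleftrightarrow> s = t" if "valid_nf t" for t
      using nf_word_braid_eq_imp_eq[OF s(1) that] s(2) braid_eq.sym braid_eq.trans by metis
    then show ?thesis
      unfolding normal_data_iff by (metis nf_word.simps(2) s(1) s_Normal)
  qed
  show ?thesis
    unfolding data_iff s_Normal by (auto intro!: ex1I[of _ "(j, k, alt_terms (3 - j) es, l)"])
qed

end
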